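(* Let $a\ge0$. (i) If $f\in\mathcal{A}_a$ and $g\in\mathcal{A}_b$ ($b\ge0$), then $fg\in\mathcal{A}_{a+b}$. (ii) Let $f\in\mathcal{A}_a$ and let $g$ be an entire function such that, for some fixed $r_0\ge0$, the function $\lambda(r,r_0)=\log M_g(r)-\log M_f(r+r_0)$ is bounded as a function of $r\in[0,\infty)$. Then $g\in\mathcal{A}_a$.
   Context: For entire $f$: $M_f(r)=\sup_{|z|\le r}|f(z)|$; for $b>0$, $\|f\|_b=\sup_{k\in\mathbb{N}_0}b^{-k}|f^{(k)}(0)|$; for $a\ge0$, $\mathcal{A}_a=\{f \text{ entire}:\|f\|_b<\infty\ \forall b>a\}$. *)

theory Defs
  imports "HOL-Complex_Analysis.Complex_Analysis"
begin

definition entire :: "(complex \<Rightarrow> complex) \<Rightarrow> bool" where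
  "entire f \<longleftrightarrow> f holomorphic_on UNIV"

definition max_mod :: "(complex \<Rightarrow> complex) \<Rightarrow> real \<Rightarrow> real" where
  "max_mod f r = (SUP z\<in>cball 0 r. norm (f z))"

text \<open>||f||_b < infinity: the sequence b^(-k) |f^(k)(0)| is bounded above.\<close>
definition norm_b_finite :: "real \<Rightarrow> (complex \<Rightarrow> complex) \<Rightarrow> bool" where
  "norm_b_finite b f \<longleftrightarrow> bdd_above (range (\<lambda>k::nat. norm ((deriv ^^ k) f 0) / b ^ k))"

definition class_A :: "real \<Rightarrow> (complex \<Rightarrow> complex) set" where
  "class_A a = {f. entire f \<and> (\<forall>b>a. norm_b_finite b f)}"

end

theory Submission
  imports Defs
begin

(* A function f lies in A_a iff |f^(k)(0)| <= B b^k for every b > a.  Part (i) is Leibniz's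
   rule for (fg)^(n) followed by the binomial theorem.  For part (ii), such coefficient bounds
   are equivalent, up to enlarging b arbitrarily little, to the growth bound
   |f z| <= K e^(b |z|): one direction compares the Taylor series with that of e^(b |z|), the
   other is Cauchy's estimate on the circle of radius k/b together with k! <= e k (k/e)^k.
   The hypothesis on log M_g transfers the growth bound from f to g, the shift by r0 only
   costing the constant factor e^(b r0). *)

lemma fact_mult_exp_le:
  fixes n :: nat
  assumes "n \<ge> 1"
  shows "fact n * exp (real n) \<le> exp 1 * real n ^ (n + 1)"
  using assms
proof (induction n rule: dec_induct)
  case base
  then show ?case by simp
next
  case (step n)
  have "(1 - 1 / real (n + 1)) ^ (n + 1) \<le> exp (-1)"
    by (rule exp_ge_one_minus_x_over_n_power_n) auto
  moreover have "1 - 1 / real (n + 1) = real n / (real n + 1)"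
    by (simp add: field_simps)
  ultimately have "real n ^ (n + 1) \<le> exp (-1) * (real n + 1) ^ (n + 1)"
    by (simp add: power_divide divide_le_eq)
  then have key: "exp 1 * real n ^ (n + 1) \<le> (real n + 1) ^ (n + 1)"
    by (simp add: exp_minus field_simps)
  have "fact (Suc n) * exp (real (Suc n)) = (real n + 1) * exp 1 * (fact n * exp (real n))"
    by (simp add: exp_add algebra_simps)
  also have "\<dots> \<le> (real n + 1) * exp 1 * (exp 1 * real n ^ (n + 1))"
    using step.IH by (intro mult_left_mono) auto
  also have "\<dots> \<le> (real n + 1) * exp 1 * (real n + 1) ^ (n + 1)"
    using key by (intro mult_left_mono) auto
  also have "\<dots> = exp 1 * real (Suc n) ^ (Suc n + 1)"
    by (simp add: algebra_simps)
  finally show ?case .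
qed

lemma of_nat_mult_power_le:
  fixes b c :: real
  assumes "0 < b" "b < c"
  shows "real k * b ^ k \<le> c ^ k / (c / b - 1)"
proof -
  have d: "c / b - 1 > 0" using assms by (simp add: field_simps)
  have "1 + real k * (c / b - 1) \<le> (1 + (c / b - 1)) ^ k"
    using d by (intro Bernoulli_inequality) simp
  then have "real k \<le> (c / b) ^ k / (c / b - 1)"
    using d by (simp add: pos_le_divide_eq)
  then have "real k * b ^ k \<le> (c / b) ^ k / (c / b - 1) * b ^ k"
    using assms by (intro mult_right_mono) auto
  also have "\<dots> = c ^ k / (c / b - 1)"
    using assms by (simp add: power_divide)
  finally show ?thesis .
qed

lemma entire_imp_holomorphic_on: "entire f \<Longrightarrow> f holomorphic_on S"
  unfolding entire_def using holomorphic_on_subset by blast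

lemma entire_imp_continuous_on: "entire f \<Longrightarrow> continuous_on S f"
  by (simp add: entire_imp_holomorphic_on holomorphic_on_imp_continuous_on)

lemma norm_b_finite_iff:
  assumes "b > 0"
  shows "norm_b_finite b f \<longleftrightarrow> (\<exists>B. \<forall>k. norm ((deriv ^^ k) f 0) \<le> B * b ^ k)"
  using assms by (simp add: norm_b_finite_def bdd_above_def divide_le_eq mult.commute)

lemma higher_deriv_mult_le:
  fixes f g :: "complex \<Rightarrow> complex"
  assumes "f holomorphic_on S" "g holomorphic_on S" "open S" "z \<in> S"
    and f: "\<And>k. norm ((deriv ^^ k) f z) \<le> A * b ^ k"
    and g: "\<And>k. norm ((deriv ^^ k) g z) \<le> B * c ^ k"
    and "b \<ge> 0" "c \<ge> 0"
  shows "norm ((deriv ^^ n) (\<lambda>w. f w * g w) z) \<le> A * B * (b + c) ^ n"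
proof -
  have "norm ((deriv ^^ n) (\<lambda>w. f w * g w) z)
      = norm (\<Sum>i = 0..n. of_nat (n choose i) * (deriv ^^ i) f z * (deriv ^^ (n - i)) g z)"
    using assms by (simp add: higher_deriv_mult)
  also have "\<dots> \<le> (\<Sum>i = 0..n. real (n choose i) * norm ((deriv ^^ i) f z) * norm ((deriv ^^ (n - i)) g z))"
    by (rule norm_sum[THEN order_trans]) (simp add: norm_mult)
  also have "\<dots> \<le> (\<Sum>i = 0..n. real (n choose i) * (A * b ^ i) * (B * c ^ (n - i)))"
  proof -
    have "0 \<le> A * b ^ i" for i
      using f[of i] norm_ge_zero order_trans by blast
    then show ?thesis
      using f g by (intro sum_mono mult_mono mult_left_mono) auto
  qed
  also have "\<dots> = A * B * (b + c) ^ n"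
    by (simp add: binomial_ring atLeast0AtMost sum_distrib_left algebra_simps)
  finally show ?thesis .
qed

lemma class_A_mult:
  assumes "a \<ge> 0" "b \<ge> 0" "f \<in> class_A a" "g \<in> class_A b"
  shows "(\<lambda>z. f z * g z) \<in> class_A (a + b)"
proof -
  have hol: "f holomorphic_on UNIV" "g holomorphic_on UNIV"
    using assms by (auto simp: class_A_def entire_def)
  have "norm_b_finite c (\<lambda>z. f z * g z)" if "c > a + b" for c
  proof -
    define e where "e = (c - (a + b)) / 2"
    have e: "e > 0" "(a + e) + (b + e) = c"
      using that by (auto simp: e_def)
    have "norm_b_finite (a + e) f" "norm_b_finite (b + e) g"
      using assms e by (auto simp: class_A_def)
    then obtain A B where A: "\<And>k. norm ((deriv ^^ k) f 0) \<le> A * (a + e) ^ k"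
      and B: "\<And>k. norm ((deriv ^^ k) g 0) \<le> B * (b + e) ^ k"
      using assms e by (auto simp: norm_b_finite_iff)
    have "norm ((deriv ^^ k) (\<lambda>z. f z * g z) 0) \<le> A * B * c ^ k" for k
      using higher_deriv_mult_le[OF hol open_UNIV UNIV_I A B] assms e by simp
    then show ?thesis
      using assms e by (auto simp: norm_b_finite_iff)
  qed
  then show ?thesis
    using hol by (simp add: class_A_def entire_def holomorphic_on_mult)
qed

lemma entire_norm_le_exp_if_higher_deriv_le:
  fixes f :: "complex \<Rightarrow> complex"
  assumes "entire f" "b \<ge> 0"
    and coeff: "\<And>k. norm ((deriv ^^ k) f 0) \<le> B * b ^ k"
  shows "norm (f w) \<le> B * exp (b * norm w)"
proof -
  let ?t = "\<lambda>k. (deriv ^^ k) f 0 / fact k * (w - 0) ^ k"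
  let ?u = "\<lambda>k. B * ((b * norm w) ^ k / fact k)"
  have "f holomorphic_on ball 0 (norm w + 1)"
    using assms(1) by (rule entire_imp_holomorphic_on)
  then have taylor: "?t sums f w"
    by (rule holomorphic_power_series) simp
  have exp_series: "?u sums (B * exp (b * norm w))"
    using exp_converges[of "b * norm w"]
    by (intro sums_mult) (simp add: divide_inverse_commute scaleR_conv_of_real)
  have le: "norm (?t k) \<le> ?u k" for k
  proof -
    have "norm (?t k) = norm ((deriv ^^ k) f 0) * norm w ^ k / fact k"
      by (simp add: norm_mult norm_divide norm_power)
    also have "\<dots> \<le> B * b ^ k * norm w ^ k / fact k"
      by (intro divide_right_mono mult_right_mono coeff) auto
    finally show ?thesis
      by (simp add: power_mult_distrib)
  qed
  have summable: "summable (\<lambda>k. norm (?t k))"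
    using le by (intro summable_comparison_test'[OF sums_summable[OF exp_series]]) auto
  have "norm (f w) = norm (\<Sum>k. ?t k)"
    using taylor by (simp add: sums_iff)
  also have "\<dots> \<le> (\<Sum>k. norm (?t k))"
    by (rule summable_norm[OF summable])
  also have "\<dots> \<le> (\<Sum>k. ?u k)"
    by (rule suminf_le[OF le summable sums_summable[OF exp_series]])
  finally show ?thesis
    using exp_series by (simp add: sums_iff)
qed

lemma norm_b_finite_if_norm_le_exp:
  fixes g :: "complex \<Rightarrow> complex"
  assumes "entire g" "0 < b" "b < c"
    and growth: "\<And>z. norm (g z) \<le> K * exp (b * norm z)"
  shows "norm_b_finite c g"
proof -
  define d where "d = c / b - 1"
  have d: "d > 0" and K: "K \<ge> 0"
    using assms growth[of 0] by (auto simp: d_def field_simps intro: order_trans[OF norm_ge_zero])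
  have "norm ((deriv ^^ k) g 0) \<le> (K + K * exp 1 / d) * c ^ k" for k
  proof (cases "k = 0")
    case True
    have "0 \<le> K * exp 1 / d"
      using K d by simp
    then show ?thesis
      using growth[of 0] True by simp
  next
    case False
    define r where "r = real k / b"
    have r: "r > 0"
      using False assms by (simp add: r_def)
    \<comment> \<open>Cauchy's estimate on the circle of radius \<open>k / b\<close>, where \<open>exp (b r) / r ^ k\<close> is minimal\<close>
    have "norm ((deriv ^^ k) g 0) \<le> fact k * (K * exp (b * r)) / r ^ k"
    proof (rule Cauchy_inequality[OF _ _ r])
      show "g holomorphic_on ball 0 r" "continuous_on (cball 0 r) g"
        using assms(1) by (simp_all add: entire_imp_holomorphic_on entire_imp_continuous_on)
      show "norm (g z) \<le> K * exp (b * r)" if "norm (0 - z) = r" for z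
        using growth[of z] that by simp
    qed
    also have "\<dots> = K * (fact k * exp (real k)) * b ^ k / real k ^ k"
      using assms by (simp add: r_def power_divide)
    also have "\<dots> \<le> K * (exp 1 * real k ^ (k + 1)) * b ^ k / real k ^ k"
      using False K assms
      by (intro divide_right_mono mult_right_mono mult_left_mono fact_mult_exp_le) auto
    also have "\<dots> = K * exp 1 * (real k * b ^ k)"
      using False by (simp add: field_simps)
    also have "\<dots> \<le> K * exp 1 * (c ^ k / d)"
      unfolding d_def using K assms by (intro mult_left_mono of_nat_mult_power_le) auto
    also have "\<dots> \<le> (K + K * exp 1 / d) * c ^ k"
      using K d assms by (simp add: field_simps)
    finally show ?thesis .
  qed
  then show ?thesis
    using assms by (auto simp: norm_b_finite_iff)
qed

lemma norm_le_max_mod: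
  assumes "continuous_on (cball 0 r) f" "norm z \<le> r"
  shows "norm (f z) \<le> max_mod f r"
proof -
  have "bounded (f ` cball 0 r)"
    using assms(1) by (intro compact_imp_bounded compact_continuous_image) auto
  then have "bdd_above ((\<lambda>z. norm (f z)) ` cball 0 r)"
    by (auto simp: bounded_iff bdd_above_def)
  then show ?thesis
    unfolding max_mod_def using assms(2) by (intro cSUP_upper) auto
qed

lemma max_mod_le:
  assumes "r \<ge> 0" "\<And>z. norm z \<le> r \<Longrightarrow> norm (f z) \<le> M"
  shows "max_mod f r \<le> M"
  unfolding max_mod_def using assms by (intro cSUP_least) auto

text \<open>The \<open>max 1 y\<close> accounts for \<open>y = 0\<close>, where \<open>ln y\<close> takes the junk value \<open>0\<close>.\<close>
lemma le_exp_mult_max_if_abs_ln_diff_le: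
  fixes x y C :: real
  assumes "0 \<le> y" "\<bar>ln x - ln y\<bar> \<le> C"
  shows "x \<le> exp C * max 1 y"
proof (cases "x > 0")
  case True
  then have "x \<le> exp (C + ln y)"
    using assms(2) by (metis abs_le_D1 diff_le_eq exp_le_cancel_iff exp_ln)
  also have "\<dots> \<le> exp C * max 1 y"
    using assms(1) by (cases "y = 0") (auto simp: exp_add)
  finally show ?thesis .
qed (simp add: order_trans[OF _ less_imp_le[OF mult_pos_pos]])

lemma norm_le_exp_if_max_mod_comparison:
  fixes f g :: "complex \<Rightarrow> complex"
  assumes "entire f" "entire g" "b \<ge> 0" "r0 \<ge> 0"
    and comparison: "\<And>r. r \<ge> 0 \<Longrightarrow> \<bar>ln (max_mod g r) - ln (max_mod f (r + r0))\<bar> \<le> C"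
    and growth: "\<And>z. norm (f z) \<le> A * exp (b * norm z)"
  shows "norm (g z) \<le> exp C * (1 + A * exp (b * r0)) * exp (b * norm z)"
proof -
  have "norm (f 0) \<le> A"
    using growth[of 0] by simp
  then have A: "A \<ge> 0"
    using norm_ge_zero[of "f 0"] by linarith
  let ?F = "max_mod f (norm z + r0)"
  have "norm (f 0) \<le> ?F"
    using assms(1,4) by (intro norm_le_max_mod entire_imp_continuous_on) auto
  then have F_nonneg: "?F \<ge> 0"
    using norm_ge_zero[of "f 0"] by linarith
  have "?F \<le> A * exp (b * (norm z + r0))"
  proof (rule max_mod_le)
    fix w :: complex
    assume "norm w \<le> norm z + r0"
    then have "A * exp (b * norm w) \<le> A * exp (b * (norm z + r0))"
      using A assms(3) by (intro mult_left_mono) (auto intro: mult_left_mono)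
    then show "norm (f w) \<le> A * exp (b * (norm z + r0))"
      using growth[of w] by linarith
  qed (use assms(4) in simp)
  then have "?F \<le> A * exp (b * r0) * exp (b * norm z)"
    by (simp add: distrib_left exp_add mult_ac)
  moreover have "1 \<le> exp (b * norm z)" "0 \<le> A * exp (b * r0) * exp (b * norm z)"
    using A assms(3) by simp_all
  ultimately have max_le: "max 1 ?F \<le> (1 + A * exp (b * r0)) * exp (b * norm z)"
    unfolding distrib_right mult_1_left by linarith
  have "norm (g z) \<le> max_mod g (norm z)"
    by (rule norm_le_max_mod[OF entire_imp_continuous_on[OF assms(2)]]) simp
  also have "\<dots> \<le> exp C * max 1 ?F"
    using F_nonneg comparison[of "norm z"] by (intro le_exp_mult_max_if_abs_ln_diff_le) auto
  also have "\<dots> \<le> exp C * ((1 + A * exp (b * r0)) * exp (b * norm z))"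
    using max_le by (intro mult_left_mono) auto
  finally show ?thesis
    by (simp add: mult.assoc)
qed

lemma class_A_if_max_mod_comparison:
  assumes "a \<ge> 0" "f \<in> class_A a" "entire g" "r0 \<ge> 0"
    and comparison: "\<And>r. r \<ge> 0 \<Longrightarrow> \<bar>ln (max_mod g r) - ln (max_mod f (r + r0))\<bar> \<le> C"
  shows "g \<in> class_A a"
proof -
  have "norm_b_finite c g" if "c > a" for c
  proof -
    define b where "b = (a + c) / 2"
    have b: "a < b" "b < c" "0 < b"
      using that assms(1) by (auto simp: b_def)
    have f: "entire f" "norm_b_finite b f"
      using assms(2) b by (auto simp: class_A_def)
    then obtain A where "\<And>k. norm ((deriv ^^ k) f 0) \<le> A * b ^ k"
      using b by (auto simp: norm_b_finite_iff)
    then have "norm (f z) \<le> A * exp (b * norm z)" for z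
      using entire_norm_le_exp_if_higher_deriv_le f b by simp
    then have "norm (g z) \<le> exp C * (1 + A * exp (b * r0)) * exp (b * norm z)" for z
      using norm_le_exp_if_max_mod_comparison[OF f(1) assms(3) _ assms(4) comparison] b by simp
    then show ?thesis
      using norm_b_finite_if_norm_le_exp[OF assms(3) b(3,2)] by blast
  qed
  then show ?thesis
    using assms(3) by (simp add: class_A_def)
qed

theorem proposition2p2:
  fixes a :: real
  assumes "a \<ge> 0"
  shows "(\<forall>b f g. b \<ge> 0 \<longrightarrow> f \<in> class_A a \<longrightarrow> g \<in> class_A b \<longrightarrow>
            (\<lambda>z. f z * g z) \<in> class_A (a + b))
       \<and> (\<forall>f g r0. f \<in> class_A a \<longrightarrow> entire g \<longrightarrow> r0 \<ge> 0 \<longrightarrow>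
            (\<exists>C. \<forall>r\<ge>0. \<bar>ln (max_mod g r) - ln (max_mod f (r + r0))\<bar> \<le> C) \<longrightarrow>
            g \<in> class_A a)"
proof (intro conjI allI impI)
  fix b :: real and f g :: "complex \<Rightarrow> complex"
  assume "b \<ge> 0" "f \<in> class_A a" "g \<in> class_A b"
  then show "(\<lambda>z. f z * g z) \<in> class_A (a + b)"
    using class_A_mult[OF assms] by blast
next
  fix f g :: "complex \<Rightarrow> complex" and r0 :: real
  assume "f \<in> class_A a" "entire g" "r0 \<ge> 0"
    and "\<exists>C. \<forall>r\<ge>0. \<bar>ln (max_mod g r) - ln (max_mod f (r + r0))\<bar> \<le> C"
  then show "g \<in> class_A a"
    using class_A_if_max_mod_comparison[OF assms] by blast
qed

end
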